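(* Let $\mu$ be a stationary ergodic and non-degenerate probability measure on $\Omega$. If $\mathbb P_0(T_{-1}=\infty)>0$, then $\mathbb P_0$-almost surely the walk makes only finitely many right excursions from $0$.
   Context: Notation: $\mathbb N=\{1,2,\dots\}$. Cookie environments $\omega\in\Omega=[0,1]^{\mathbb Z\times\mathbb N}$; shift $(\theta\omega)(x,n)=\omega(x+1,n)$; $\mu$ stationary ergodic means $\theta$-invariant and ergodic. Under $P_{\omega,x}$ the excited random walk has $X_0=x$ and from $X_{n-1}$ steps to $X_{n-1}+1$ with probability $\omega(X_{n-1},\#\{k\le n-1:X_k=X_{n-1}\})$, otherwise to $X_{n-1}-1$; $\mathbb P_x=\int P_{\omega,x}\,d\mu(\omega)$. Equivalently, the walk is driven by the random arrow environment $a(x,n)=\mathbf 1_{\{u(x,n)<\omega(x,n)\}}$ with $u(x,n)$ i.i.d. Uniform$[0,1]$ independent of $\omega\sim\mu$, the walk using at its $k$-th visit to $x$ the arrow $a(x,k)$ (1 = step right, 0 = step left). A sequence $b\in\{0,1\}^{\mathbb N}$ is non-degenerate if $b(i)\ne b(i+1)$ for infinitely many $i$; $\mu$ is non-degenerate if almost surely every $a(x,\cdot)$ is non-degenerate. $T_m=\inf\{t\ge0:X_t=m\}$. A right excursion (from $0$) is a segment $X_{\tau_0},\dots,X_{\tau_1}$ with $\tau_0<\tau_1\le\infty$, $X_{\tau_0}=0$, $X_t>0$ for $\tau_0<t<\tau_1$, and either $\tau_1=\infty$ or $X_{\tau_1}=0$. *)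

theory Defs
  imports "HOL-Probability.Probability"
begin

type_synonym env = "int \<times> nat \<Rightarrow> real"

definition idx :: "(int \<times> nat) set" where
  "idx = {(x, n). 1 \<le> n}"

definition OmegaM :: "env measure" where
  "OmegaM = PiM idx (\<lambda>_. restrict_space borel {0..1})"

definition shift :: "env \<Rightarrow> env" where
  "shift \<omega> = restrict (\<lambda>(x, n). \<omega> (x + 1, n)) idx"

definition stationary_ergodic :: "env measure \<Rightarrow> bool" where
  "stationary_ergodic \<mu> \<longleftrightarrow>
     prob_space \<mu> \<and> sets \<mu> = sets OmegaM \<and>
     distr \<mu> OmegaM shift = \<mu> \<and>
     (\<forall>A \<in> sets \<mu>. shift -` A \<inter> space \<mu> = A \<longrightarrow> measure \<mu> A = 0 \<or> measure \<mu> A = 1)"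

definition jointM :: "env measure \<Rightarrow> (env \<times> env) measure" where
  "jointM \<mu> = \<mu> \<Otimes>\<^sub>M PiM idx (\<lambda>_. uniform_measure lborel {0..1::real})"

text \<open>Arrow environment a(x,n) = 1_{u(x,n) < omega(x,n)} (True = step right).\<close>
definition arrow :: "env \<times> env \<Rightarrow> int \<Rightarrow> nat \<Rightarrow> bool" where
  "arrow p x n \<longleftrightarrow> snd p (x, n) < fst p (x, n)"

text \<open>Walk state after n steps: current position and visit counts over times 0..n-1.
  At time n at site y, this is visit number (c y + 1), which uses arrow a y (c y + 1).\<close>
fun walk_state :: "(int \<Rightarrow> nat \<Rightarrow> bool) \<Rightarrow> int \<Rightarrow> nat \<Rightarrow> int \<times> (int \<Rightarrow> nat)" where
  "walk_state a x 0 = (x, (\<lambda>_. 0))"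
| "walk_state a x (Suc n) =
     (let (y, c) = walk_state a x n; k = Suc (c y)
      in (if a y k then y + 1 else y - 1, c(y := k)))"

definition walk :: "(int \<Rightarrow> nat \<Rightarrow> bool) \<Rightarrow> int \<Rightarrow> nat \<Rightarrow> int" where
  "walk a x n = fst (walk_state a x n)"

definition nondegenerate_seq :: "(nat \<Rightarrow> bool) \<Rightarrow> bool" where
  "nondegenerate_seq b \<longleftrightarrow> infinite {i. 1 \<le> i \<and> b i \<noteq> b (Suc i)}"

definition nondegenerate :: "env measure \<Rightarrow> bool" where
  "nondegenerate \<mu> \<longleftrightarrow> (AE p in jointM \<mu>. \<forall>x. nondegenerate_seq (arrow p x))"

definition right_excursion :: "(nat \<Rightarrow> int) \<Rightarrow> nat \<Rightarrow> enat \<Rightarrow> bool" where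
  "right_excursion X \<tau>0 \<tau>1 \<longleftrightarrow>
     enat \<tau>0 < \<tau>1 \<and> X \<tau>0 = 0 \<and>
     (\<forall>t. \<tau>0 < t \<and> enat t < \<tau>1 \<longrightarrow> X t > 0) \<and>
     (\<tau>1 = \<infinity> \<or> X (the_enat \<tau>1) = 0)"

end

theory Submission
  imports Defs
begin

text \<open>If the walk returned to \<open>0\<close> infinitely often, non-degeneracy would push it to every
  level \<open>x \<ge> 1\<close>. When it first reaches \<open>x\<close> it has used no arrow at or right of \<open>x\<close>, so it
  then moves like the walk started at \<open>x\<close>; to come back to \<open>0\<close> that walk must drop below \<open>x\<close>.
  So recurrence forces the event that, beyond some level, the walk from every site drops below
  its start. Given the environment this is a tail event of the independent columns of uniform
  variables, and its conditional probability is shift-invariant, hence by ergodicity the event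
  has probability \<open>0\<close> or \<open>1\<close>. It has probability at most that of the walk from \<open>0\<close> hitting
  \<open>-1\<close>, which is below \<open>1\<close> by hypothesis; so the walk visits \<open>0\<close> only finitely often.\<close>

section \<open>Walks in a fixed arrow environment\<close>

definition walk_step :: "(int \<Rightarrow> nat \<Rightarrow> bool) \<Rightarrow> int \<times> (int \<Rightarrow> nat) \<Rightarrow> int \<times> (int \<Rightarrow> nat)" where
  "walk_step a s = (if a (fst s) (Suc (snd s (fst s))) then fst s + 1 else fst s - 1,
                    (snd s)(fst s := Suc (snd s (fst s))))"

abbreviation visits :: "(int \<Rightarrow> nat \<Rightarrow> bool) \<Rightarrow> int \<Rightarrow> nat \<Rightarrow> int \<Rightarrow> nat" where
  "visits a x n y \<equiv> snd (walk_state a x n) y"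

lemma walk_state_Suc: "walk_state a x (Suc n) = walk_step a (walk_state a x n)"
  by (simp add: walk_step_def split: prod.split)

declare walk_state.simps(2)[simp del]

lemma walk_state_add: "walk_state a x (m + n) = (walk_step a ^^ n) (walk_state a x m)"
  by (induction n) (simp_all add: walk_state_Suc)

lemma walk_state_eq_funpow: "walk_state a x n = (walk_step a ^^ n) (x, \<lambda>_. 0)"
  using walk_state_add[of a x 0 n] by simp

lemma walk_0 [simp]: "walk a x 0 = x"
  by (simp add: walk_def)

lemma walk_Suc: "walk a x (Suc n) = (if a (walk a x n) (Suc (visits a x n (walk a x n)))
                                     then walk a x n + 1 else walk a x n - 1)"
  by (simp add: walk_def walk_state_Suc walk_step_def)

lemma walk_Suc_cases: "walk a x (Suc n) = walk a x n + 1 \<or> walk a x (Suc n) = walk a x n - 1"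
  by (simp add: walk_Suc)

lemma visits_Suc: "visits a x (Suc n) y = visits a x n y + (if walk a x n = y then 1 else 0)"
  by (simp add: walk_state_Suc walk_step_def walk_def)

lemma visits_eq_card: "visits a x n y = card {i. i < n \<and> walk a x i = y}"
proof (induction n)
  case (Suc n)
  have "{i. i < Suc n \<and> walk a x i = y} =
        {i. i < n \<and> walk a x i = y} \<union> (if walk a x n = y then {n} else {})"
    by (auto simp: less_Suc_eq)
  then show ?case using Suc by (simp add: visits_Suc)
qed simp

lemma visits_le: "visits a x n y \<le> n"
  unfolding visits_eq_card by (rule order_trans[OF card_mono[of "{..<n}"]]) auto

lemma visits_mono: "m \<le> n \<Longrightarrow> visits a x m y \<le> visits a x n y"
  unfolding visits_eq_card by (rule card_mono) auto

lemma walk_le: "walk a x n \<le> x + int n"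
proof (induction n)
  case (Suc n)
  then show ?case using walk_Suc_cases[of a x n] by auto
qed simp

lemma walk_cong:
  assumes "\<And>y k. 0 < k \<Longrightarrow> a y k = a' y k"
  shows "walk a x n = walk a' x n"
proof -
  have "walk_state a x n = walk_state a' x n"
    by (induction n) (simp_all add: walk_state_Suc walk_step_def assms)
  then show ?thesis by (simp add: walk_def)
qed

lemma walk_shift_arrows: "walk (\<lambda>y k. a (y + 1) k) x n = walk a (x + 1) n - 1"
proof -
  have "walk_state (\<lambda>y k. a (y + 1) k) x n =
          (fst (walk_state a (x + 1) n) - 1, \<lambda>y. visits a (x + 1) n (y + 1))"
  proof (induction n)
    case (Suc n)
    then show ?case
      by (cases "walk_state a (x + 1) n") (simp add: walk_state_Suc walk_step_def fun_eq_iff)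
  qed simp
  then show ?thesis by (simp add: walk_def)
qed

definition drops_below_by :: "int \<Rightarrow> nat \<Rightarrow> (int \<Rightarrow> nat \<Rightarrow> bool) \<Rightarrow> bool" where
  "drops_below_by x t a \<longleftrightarrow> (\<exists>i\<le>t. walk a x i < x)"

definition drops_below :: "int \<Rightarrow> (int \<Rightarrow> nat \<Rightarrow> bool) \<Rightarrow> bool" where
  "drops_below x a \<longleftrightarrow> (\<exists>i. walk a x i < x)"

lemma drops_below_iff_by: "drops_below x a \<longleftrightarrow> (\<exists>t. drops_below_by x t a)"
  by (auto simp: drops_below_def drops_below_by_def)

lemma drops_below_iff_hits_pred: "drops_below x a \<longleftrightarrow> (\<exists>t. walk a x t = x - 1)"
proof
  assume "drops_below x a"
  then obtain i where i: "walk a x i < x" "\<forall>j<i. walk a x j \<ge> x"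
    using exists_least_iff[of "\<lambda>i. walk a x i < x"] unfolding drops_below_def by (auto simp: not_less)
  then obtain j where j: "i = Suc j"
    by (cases i) auto
  then have "walk a x i = x - 1"
    using i walk_Suc_cases[of a x j] by force
  then show "\<exists>t. walk a x t = x - 1" ..
next
  assume "\<exists>t. walk a x t = x - 1"
  then obtain t where "walk a x t = x - 1" ..
  then show "drops_below x a"
    unfolding drops_below_def by (intro exI[of _ t]) simp
qed

lemma drops_below_cong: "(\<And>y k. 0 < k \<Longrightarrow> a y k = a' y k) \<Longrightarrow> drops_below x a = drops_below x a'"
  unfolding drops_below_def using walk_cong[of a a'] by metis

lemma drops_below_shift_arrows: "drops_below x (\<lambda>y k. a (y + 1) k) \<longleftrightarrow> drops_below (x + 1) a"
  unfolding drops_below_def walk_shift_arrows by (simp add: diff_less_eq)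

lemma walk_state_local:
  assumes agree: "\<And>y k. x \<le> y \<Longrightarrow> y \<le> x + int t \<Longrightarrow> 1 \<le> k \<Longrightarrow> k \<le> t \<Longrightarrow> a y k = a' y k"
  shows "i \<le> t \<Longrightarrow> \<forall>j<i. x \<le> walk a x j \<Longrightarrow> walk_state a x i = walk_state a' x i"
proof (induction i)
  case (Suc i)
  then have eq: "walk_state a x i = walk_state a' x i" and ge: "x \<le> walk a x i"
    by auto
  have "walk a x i \<le> x + int t"
    using walk_le[of a x i] Suc.prems by auto
  moreover have "Suc (visits a x i (walk a x i)) \<le> t"
    using visits_le[of a x i] Suc.prems by (meson Suc_le_mono le_trans)
  ultimately show ?case
    using eq agree[OF ge] by (simp add: walk_state_Suc walk_step_def walk_def)
qed simp

lemma drops_below_by_local: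
  assumes "\<And>y k. x \<le> y \<Longrightarrow> y \<le> x + int t \<Longrightarrow> 1 \<le> k \<Longrightarrow> k \<le> t \<Longrightarrow> a y k = a' y k"
  shows "drops_below_by x t a = drops_below_by x t a'"
proof -
  have one_way: "drops_below_by x t b'"
    if agree: "\<And>y k. x \<le> y \<Longrightarrow> y \<le> x + int t \<Longrightarrow> 1 \<le> k \<Longrightarrow> k \<le> t \<Longrightarrow> b y k = b' y k"
      and "drops_below_by x t b" for b b'
  proof -
    obtain i where i: "i \<le> t" "walk b x i < x" "\<forall>j<i. x \<le> walk b x j"
      using \<open>drops_below_by x t b\<close> exists_least_iff[of "\<lambda>i. i \<le> t \<and> walk b x i < x"]
      unfolding drops_below_by_def by (auto simp: not_less dest: order.strict_trans1)
    then have "walk_state b x i = walk_state b' x i"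
      using walk_state_local[of x t b b', OF agree] by blast
    then show ?thesis
      using i unfolding drops_below_by_def walk_def by auto
  qed
  show ?thesis
    using one_way[of a a'] one_way[of a' a] assms by metis
qed

lemma walk_step_funpow_coupling:
  assumes "fst s = fst s'" "\<And>y. z \<le> y \<Longrightarrow> snd s y = snd s' y"
    and "\<forall>j<n. z \<le> fst ((walk_step a ^^ j) s)"
  shows "fst ((walk_step a ^^ n) s) = fst ((walk_step a ^^ n) s') \<and>
         (\<forall>y\<ge>z. snd ((walk_step a ^^ n) s) y = snd ((walk_step a ^^ n) s') y)"
  using assms(3)
proof (induction n)
  case (Suc n)
  define S S' where "S = (walk_step a ^^ n) s" and "S' = (walk_step a ^^ n) s'"
  have "fst S = fst S'" "\<forall>y\<ge>z. snd S y = snd S' y" "z \<le> fst S"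
    using Suc by (auto simp: S_def S'_def)
  then show ?case
    unfolding funpow.simps comp_apply S_def[symmetric] S'_def[symmetric]
    by (simp add: walk_step_def)
qed (use assms(1,2) in simp)

lemma walk_after_first_hit:
  assumes hit: "walk a x0 s = z" and before: "\<forall>t<s. walk a x0 t < z"
    and after: "\<forall>e<d. z \<le> walk a x0 (s + e)"
  shows "walk a z d = walk a x0 (s + d)"
proof -
  have "\<And>y. z \<le> y \<Longrightarrow> visits a x0 s y = 0"
    using before by (auto simp: visits_eq_card)
  moreover have "\<forall>j<d. z \<le> fst ((walk_step a ^^ j) (walk_state a x0 s))"
    using after by (simp add: walk_def walk_state_add)
  ultimately have "fst ((walk_step a ^^ d) (walk_state a x0 s)) = fst ((walk_step a ^^ d) (z, \<lambda>_. 0))"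
    using walk_step_funpow_coupling[of "walk_state a x0 s" "(z, \<lambda>_. 0)" z d a] hit
    by (simp add: walk_def)
  then show ?thesis
    unfolding walk_def walk_state_add[of a x0 s d] walk_state_eq_funpow[of a z d] by simp
qed

section \<open>Recurrence forces escapes\<close>

lemma nondegenerate_seq_True_beyond:
  assumes "nondegenerate_seq b" shows "\<exists>k\<ge>K. b k"
proof -
  obtain i where i: "b i \<noteq> b (Suc i)" "K \<le> i"
    using assms unfolding nondegenerate_seq_def infinite_nat_iff_unbounded_le by blast
  then show ?thesis
    by (cases "b i") (auto intro: le_SucI)
qed

lemma visits_unbounded:
  assumes "infinite {t. walk a x t = y}"
  shows "\<exists>t. N \<le> visits a x t y"
proof -
  obtain F where F: "F \<subseteq> {t. walk a x t = y}" "finite F" "card F = N"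
    using infinite_arbitrarily_large[OF assms] by blast
  define t where "t = Suc (Max (insert 0 F))"
  have "F \<subseteq> {i. i < t \<and> walk a x i = y}"
  proof
    fix i assume "i \<in> F"
    then have "i \<le> Max (insert 0 F)"
      using F(2) by (intro Max_ge) auto
    then show "i \<in> {i. i < t \<and> walk a x i = y}"
      using F(1) \<open>i \<in> F\<close> by (auto simp: t_def)
  qed
  then have "card F \<le> visits a x t y"
    unfolding visits_eq_card by (intro card_mono) auto
  then show ?thesis using F by auto
qed

lemma visited_infinitely_often_Suc:
  assumes io: "infinite {t. walk a x t = y}" and nd: "nondegenerate_seq (a y)"
  shows "infinite {t. walk a x t = y + 1}"
  unfolding infinite_nat_iff_unbounded_le
proof
  fix T
  obtain k where k: "visits a x T y + 2 \<le> k" "a y k"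
    using nondegenerate_seq_True_beyond[OF nd] by blast
  obtain t0 where t0: "k \<le> visits a x t0 y" "\<forall>t<t0. visits a x t y < k"
    using visits_unbounded[OF io] exists_least_iff[of "\<lambda>t. k \<le> visits a x t y"]
    by (auto simp: not_le)
  obtain j where j: "t0 = Suc j"
    using t0(1) k(1) by (cases t0) auto
  have at_y: "walk a x j = y" and kth: "Suc (visits a x j y) = k"
    using t0 j visits_Suc[of a x j y] by (auto split: if_splits)
  have "T \<le> j"
    using visits_mono[of j T a x y] k(1) kth by linarith
  moreover have "walk a x (Suc j) = y + 1"
    using at_y kth k(2) by (simp add: walk_Suc)
  ultimately show "\<exists>t\<ge>T. t \<in> {t. walk a x t = y + 1}"
    by (intro exI[of _ "Suc j"]) auto
qed

lemma recurrent_walk_visits_levels: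
  assumes nd: "\<forall>y. nondegenerate_seq (a y)" and rec: "infinite {t. walk a 0 t = 0}"
  shows "infinite {t. walk a 0 t = int n}"
proof (induction n)
  case (Suc n)
  then show ?case
    using visited_infinitely_often_Suc[of a 0 "int n"] nd by (simp add: add.commute)
qed (simp add: rec)

lemma recurrent_walk_drops_below:
  assumes nd: "\<forall>y. nondegenerate_seq (a y)" and rec: "infinite {t. walk a 0 t = 0}"
    and "1 \<le> x"
  shows "drops_below x a"
proof -
  obtain s where s: "walk a 0 s = x" "\<forall>t<s. walk a 0 t \<noteq> x"
    using recurrent_walk_visits_levels[OF nd rec, of "nat x"] \<open>1 \<le> x\<close>
      exists_least_iff[of "\<lambda>t. walk a 0 t = x"] by (auto dest: not_finite_existsD)
  have before: "\<forall>t<s. walk a 0 t < x"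
  proof (intro allI impI)
    fix t assume "t < s"
    then show "walk a 0 t < x"
    proof (induction t)
      case (Suc t)
      then show ?case using s(2) walk_Suc_cases[of a 0 t] by fastforce
    qed (use \<open>1 \<le> x\<close> in simp)
  qed
  obtain t' where "s < t'" "walk a 0 t' = 0"
    using rec unfolding infinite_nat_iff_unbounded by blast
  then have "walk a 0 (s + (t' - s)) < x"
    using \<open>1 \<le> x\<close> by simp
  then obtain d where d: "walk a 0 (s + d) < x" "\<forall>e<d. x \<le> walk a 0 (s + e)"
    using exists_least_iff[of "\<lambda>d. walk a 0 (s + d) < x"] by (auto simp: not_less)
  then have "walk a x d < x"
    using walk_after_first_hit[OF s(1) before] by simp
  then show ?thesis
    unfolding drops_below_def ..
qed

definition drops_below_ultimately :: "(int \<Rightarrow> nat \<Rightarrow> bool) \<Rightarrow> bool" where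
  "drops_below_ultimately a \<longleftrightarrow> (\<exists>m::nat. \<forall>j::nat. drops_below (int m + int j) a)"

lemma drops_below_ultimately_from:
  "drops_below_ultimately a \<longleftrightarrow> (\<exists>m::nat. \<forall>j::nat. drops_below (int n + int m + int j) a)"
proof
  assume "drops_below_ultimately a"
  then obtain m where m: "\<forall>j::nat. drops_below (int m + int j) a"
    by (auto simp: drops_below_ultimately_def)
  have "drops_below (int n + int m + int j) a" for j
    using m[rule_format, of "n + j"] by (simp add: ac_simps)
  then show "\<exists>m::nat. \<forall>j::nat. drops_below (int n + int m + int j) a" by blast
next
  assume "\<exists>m::nat. \<forall>j::nat. drops_below (int n + int m + int j) a"
  then obtain m where "\<forall>j::nat. drops_below (int n + int m + int j) a" ..
  then show "drops_below_ultimately a"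
    unfolding drops_below_ultimately_def by (intro exI[of _ "n + m"]) simp
qed

lemma recurrent_imp_drops_below_ultimately:
  assumes "\<forall>y. nondegenerate_seq (a y)" and "infinite {t. walk a 0 t = 0}"
  shows "drops_below_ultimately a"
  unfolding drops_below_ultimately_def
  using recurrent_walk_drops_below[OF assms] by (intro exI[of _ 1]) simp

lemma finite_right_excursions_if_finite_zeros:
  assumes "finite {t. X t = 0}"
  shows "finite {(\<tau>0, \<tau>1). right_excursion X \<tau>0 \<tau>1}"
proof (rule finite_subset)
  let ?Z = "{t. X t = 0}"
  show "{(\<tau>0, \<tau>1). right_excursion X \<tau>0 \<tau>1} \<subseteq> ?Z \<times> insert \<infinity> (enat ` ?Z)"
  proof clarify
    fix \<tau>0 \<tau>1 assume "right_excursion X \<tau>0 \<tau>1"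
    then show "\<tau>0 \<in> ?Z \<and> \<tau>1 \<in> insert \<infinity> (enat ` ?Z)"
      by (cases \<tau>1) (auto simp: right_excursion_def)
  qed
  show "finite (?Z \<times> insert \<infinity> (enat ` ?Z))"
    using assms by simp
qed

section \<open>Measurability of escape events\<close>

lemma sets_Collect_finitely_determined:
  fixes arr :: "'p \<Rightarrow> 'i \<Rightarrow> 'j \<Rightarrow> bool" and B :: "('i \<times> 'j) set"
  assumes fin: "finite B"
    and determined: "\<And>a a'. (\<And>y k. (y, k) \<in> B \<Longrightarrow> a y k = a' y k) \<Longrightarrow> Q a = Q a'"
    and meas: "\<And>y k. (y, k) \<in> B \<Longrightarrow> {p \<in> space M. arr p y k} \<in> sets M"
  shows "{p \<in> space M. Q (arr p)} \<in> sets M"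
proof -
  define ext where "ext b = (\<lambda>y k. (y, k) \<in> B \<and> b (y, k))" for b :: "'i \<times> 'j \<Rightarrow> bool"
  let ?agrees = "\<lambda>b p. \<forall>i\<in>B. arr p (fst i) (snd i) = b i"
  have char: "Q (arr p) \<longleftrightarrow> (\<exists>b\<in>B \<rightarrow>\<^sub>E UNIV. Q (ext b) \<and> ?agrees b p)" for p
  proof
    assume "Q (arr p)"
    define b where "b = restrict (\<lambda>i. arr p (fst i) (snd i)) B"
    have "Q (ext b) = Q (arr p)"
      by (rule determined) (simp add: ext_def b_def)
    moreover have "b \<in> B \<rightarrow>\<^sub>E UNIV" "?agrees b p"
      by (simp_all add: b_def)
    ultimately show "\<exists>b\<in>B \<rightarrow>\<^sub>E UNIV. Q (ext b) \<and> ?agrees b p"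
      using \<open>Q (arr p)\<close> by blast
  next
    assume "\<exists>b\<in>B \<rightarrow>\<^sub>E UNIV. Q (ext b) \<and> ?agrees b p"
    then obtain b where "Q (ext b)" and agrees: "?agrees b p" by blast
    have "Q (ext b) = Q (arr p)"
    proof (rule determined)
      fix y k assume "(y, k) \<in> B"
      then show "ext b y k = arr p y k"
        using agrees by (force simp: ext_def)
    qed
    with \<open>Q (ext b)\<close> show "Q (arr p)" by simp
  qed
  have "{p \<in> space M. Q (ext b) \<and> ?agrees b p} \<in> sets M" for b
  proof -
    have "{p \<in> space M. ?agrees b p} \<in> sets M"
    proof (rule sets.sets_Collect_countable_All'[OF _ countable_finite[OF fin]])
      fix i assume "i \<in> B"
      then obtain y k where i: "i = (y, k)" "(y, k) \<in> B"
        by (cases i) auto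
      have "{p \<in> space M. arr p y k = b (y, k)} \<in> sets M"
        using meas[OF i(2)] sets.sets_Collect_neg[OF meas[OF i(2)]]
        by (cases "b (y, k)") simp_all
      then show "{p \<in> space M. arr p (fst i) (snd i) = b i} \<in> sets M"
        by (simp add: i(1))
    qed
    then show ?thesis
      by (cases "Q (ext b)") simp_all
  qed
  then have "{p \<in> space M. \<exists>b\<in>B \<rightarrow>\<^sub>E UNIV. Q (ext b) \<and> ?agrees b p} \<in> sets M"
    by (intro sets.sets_Collect_finite_Ex finite_PiE fin) simp_all
  moreover have "{p \<in> space M. Q (arr p)} = {p \<in> space M. \<exists>b\<in>B \<rightarrow>\<^sub>E UNIV. Q (ext b) \<and> ?agrees b p}"
    using char by blast
  ultimately show ?thesis
    by simp
qed

lemma sets_Collect_drops_below_by: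
  assumes "\<And>y k. x \<le> y \<Longrightarrow> 1 \<le> k \<Longrightarrow> {p \<in> space M. arr p y k} \<in> sets M"
  shows "{p \<in> space M. drops_below_by x t (arr p)} \<in> sets M"
proof (rule sets_Collect_finitely_determined[where B = "{x..x + int t} \<times> {1..t}"
      and Q = "drops_below_by x t" and arr = arr])
  show "finite ({x..x + int t} \<times> {1..t})"
    by simp
next
  fix a a' :: "int \<Rightarrow> nat \<Rightarrow> bool"
  assume agree: "\<And>y k. (y, k) \<in> {x..x + int t} \<times> {1..t} \<Longrightarrow> a y k = a' y k"
  show "drops_below_by x t a = drops_below_by x t a'"
    by (rule drops_below_by_local) (rule agree, simp)
next
  fix y k assume "(y, k) \<in> {x..x + int t} \<times> {1..t}"
  then show "{p \<in> space M. arr p y k} \<in> sets M"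
    using assms by simp
qed

lemma sets_Collect_drops_below:
  assumes "\<And>y k. x \<le> y \<Longrightarrow> 1 \<le> k \<Longrightarrow> {p \<in> space M. arr p y k} \<in> sets M"
  shows "{p \<in> space M. drops_below x (arr p)} \<in> sets M"
  unfolding drops_below_iff_by
  by (intro sets.sets_Collect_countable_Ex sets_Collect_drops_below_by assms)

section \<open>The uniform variables\<close>

definition uniform01 :: "real measure" where
  "uniform01 = uniform_measure lborel {0..1}"

definition noise :: "env measure" where
  "noise = PiM idx (\<lambda>_. uniform01)"

lemma jointM_eq_noise: "jointM \<mu> = \<mu> \<Otimes>\<^sub>M noise"
  by (simp add: jointM_def noise_def uniform01_def)

lemma prob_space_uniform01: "prob_space uniform01"
  unfolding uniform01_def by (rule prob_space_uniform_measure) auto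

lemma sets_uniform01 [measurable_cong]: "sets uniform01 = sets borel"
  by (simp add: uniform01_def)

lemma prob_space_noise: "prob_space noise"
  unfolding noise_def using prob_space_uniform01 by (intro prob_space_PiM) auto

lemma idx_iff [simp]: "(y, k) \<in> idx \<longleftrightarrow> 1 \<le> k"
  by (simp add: idx_def)

lemma measurable_noise_coordinate: "1 \<le> k \<Longrightarrow> (\<lambda>u. u (y, k)) \<in> borel_measurable noise"
  unfolding noise_def
  using measurable_component_singleton[of "(y, k)" idx "\<lambda>_. uniform01"]
    measurable_cong_sets[OF refl sets_uniform01] by simp

definition shift_index :: "int \<times> nat \<Rightarrow> int \<times> nat" where
  "shift_index = (\<lambda>(x, n). (x + 1, n))"

lemma shift_eq_reindex: "shift w = (\<lambda>i\<in>idx. w (shift_index i))"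
  by (simp add: shift_def shift_index_def fun_eq_iff split: prod.split)

lemma shift_index_in_idx: "shift_index \<in> idx \<rightarrow> idx"
  by (auto simp: shift_index_def idx_def)

lemma measurable_shift_PiM: "shift \<in> measurable (PiM idx (\<lambda>_. N)) (PiM idx (\<lambda>_. N))"
  unfolding shift_eq_reindex
  by (intro measurable_restrict measurable_component_singleton) (use shift_index_in_idx in auto)

lemma measurable_shift_noise: "shift \<in> measurable noise noise"
  unfolding noise_def by (rule measurable_shift_PiM)

lemma distr_shift_noise: "distr noise noise shift = noise"
proof -
  have "distr (PiM idx (\<lambda>_. uniform01)) (PiM idx (\<lambda>_. uniform01)) (\<lambda>\<omega>. \<lambda>n\<in>idx. \<omega> (shift_index n))
          = PiM idx (\<lambda>_. uniform01)"
    by (rule distr_PiM_reindex)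
      (use prob_space_uniform01 shift_index_in_idx in \<open>auto simp: inj_on_def shift_index_def\<close>)
  then show ?thesis
    unfolding noise_def shift_eq_reindex[abs_def] .
qed

lemma arrow_shift: "0 < k \<Longrightarrow> arrow (shift w, shift u) y k = arrow (w, u) (y + 1) k"
  by (auto simp: arrow_def shift_def idx_def)

lemma drops_below_arrow_shift: "drops_below x (arrow (shift w, shift u)) \<longleftrightarrow> drops_below (x + 1) (arrow (w, u))"
proof -
  have "drops_below x (arrow (shift w, shift u)) = drops_below x (\<lambda>y k. arrow (w, u) (y + 1) k)"
    by (rule drops_below_cong) (simp add: arrow_shift)
  then show ?thesis
    by (simp add: drops_below_shift_arrows)
qed

lemma drops_below_ultimately_arrow_shift:
  "drops_below_ultimately (arrow (shift w, shift u)) \<longleftrightarrow> drops_below_ultimately (arrow (w, u))"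
proof -
  have "drops_below_ultimately (arrow (shift w, shift u)) \<longleftrightarrow>
          (\<exists>m::nat. \<forall>j::nat. drops_below (int 1 + int m + int j) (arrow (w, u)))"
    unfolding drops_below_ultimately_def drops_below_arrow_shift by (simp add: ac_simps)
  then show ?thesis
    using drops_below_ultimately_from[of _ 1] by simp
qed

definition column :: "nat \<Rightarrow> (int \<times> nat) set" where
  "column m = {i \<in> idx. fst i = int m}"

definition column_events :: "nat \<Rightarrow> env set set" where
  "column_events m = sigma_sets (space noise)
     {(\<lambda>u. restrict u (column m)) -` A \<inter> space noise | A. A \<in> sets (PiM (column m) (\<lambda>_. uniform01))}"

lemma sigma_algebra_column_events: "sigma_algebra (space noise) (column_events m)"
  unfolding column_events_def by (rule sigma_algebra_sigma_sets) auto

lemma indep_sets_column_events: "prob_space.indep_sets noise column_events UNIV"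
proof -
  interpret N: prob_space noise by (rule prob_space_noise)
  have idx_ne: "idx \<noteq> {}"
    using idx_iff[of 0 1] by blast
  have coordinates: "\<And>i. i \<in> idx \<Longrightarrow> (\<lambda>u. u i) \<in> measurable noise uniform01"
    unfolding noise_def by (rule measurable_component_singleton)
  have "distr noise (PiM idx (\<lambda>_. uniform01)) (\<lambda>x. \<lambda>i\<in>idx. x i) = distr noise noise (\<lambda>x. x)"
    by (rule distr_cong) (auto simp: noise_def space_PiM uniform01_def)
  also have "\<dots> = PiM idx (\<lambda>i. distr noise uniform01 (\<lambda>x. x i))"
  proof -
    have "\<And>i. i \<in> idx \<Longrightarrow> distr (PiM idx (\<lambda>_. uniform01)) uniform01 (\<lambda>x. x i) = uniform01"
      by (rule distr_PiM_component) (auto simp: prob_space_uniform01)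
    then show ?thesis
      unfolding noise_def by (simp cong: PiM_cong)
  qed
  finally have "N.indep_vars (\<lambda>_. uniform01) (\<lambda>i u. u i) idx"
    using N.indep_vars_iff_distr_eq_PiM'[OF idx_ne coordinates] by simp
  then have "N.indep_vars (\<lambda>m. PiM (column m) (\<lambda>_. uniform01)) (\<lambda>m u. restrict u (column m)) UNIV"
    by (rule N.indep_vars_restrict) (auto simp: column_def disjoint_family_on_def)
  then show ?thesis
    unfolding N.indep_vars_def column_events_def by simp
qed

lemma column_events_less: "1 \<le> k \<Longrightarrow> {u \<in> space noise. u (int m, k) < c} \<in> column_events m"
proof -
  assume k: "1 \<le> k"
  let ?A = "{f \<in> space (PiM (column m) (\<lambda>_. uniform01)). f (int m, k) < c}"
  have "(\<lambda>f. f (int m, k)) \<in> measurable (PiM (column m) (\<lambda>_. uniform01)) uniform01"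
    by (rule measurable_component_singleton) (use k in \<open>simp add: column_def\<close>)
  then have "?A \<in> sets (PiM (column m) (\<lambda>_. uniform01))"
    using measurable_cong_sets[OF refl sets_uniform01] by (intro borel_measurable_less) auto
  moreover have "(\<lambda>u. restrict u (column m)) -` ?A \<inter> space noise = {u \<in> space noise. u (int m, k) < c}"
    using k by (auto simp: space_PiM column_def uniform01_def noise_def)
  ultimately show ?thesis
    unfolding column_events_def by (metis (mono_tags, lifting) mem_Collect_eq sigma_sets.Basic)
qed

definition noise_section :: "env \<Rightarrow> env set" where
  "noise_section w = {u \<in> space noise. drops_below_ultimately (arrow (w, u))}"

lemma noise_section_tail_event: "noise_section w \<in> prob_space.tail_events noise column_events"
proof -
  interpret N: prob_space noise by (rule prob_space_noise)
  have "noise_section w \<in> sigma_sets (space noise) (\<Union>(column_events ` {n..}))" for n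
  proof -
    define T where "T = sigma (space noise) (\<Union>(column_events ` {n..}))"
    have "\<Union>(column_events ` {n..}) \<subseteq> Pow (space noise)"
      unfolding column_events_def by (force dest: sigma_sets_into_sp[rotated])
    then have sets_T: "sets T = sigma_sets (space noise) (\<Union>(column_events ` {n..}))"
      and space_T: "space T = space noise"
      by (simp_all add: T_def)
    have drops: "{u \<in> space T. drops_below x (arrow (w, u))} \<in> sets T" if "int n \<le> x" for x
    proof (rule sets_Collect_drops_below)
      fix y :: int and k :: nat assume "x \<le> y" "1 \<le> k"
      then have "{u \<in> space T. arrow (w, u) y k} \<in> column_events (nat y)" and "nat y \<in> {n..}"
        using column_events_less[of k "nat y" "w (y, k)"] that by (auto simp: arrow_def space_T)
      then show "{u \<in> space T. arrow (w, u) y k} \<in> sets T"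
        unfolding sets_T by blast
    qed
    have "noise_section w =
            {u \<in> space T. \<exists>m::nat. \<forall>j::nat. drops_below (int n + int m + int j) (arrow (w, u))}"
      unfolding noise_section_def space_T drops_below_ultimately_from[of _ n] ..
    also have "\<dots> \<in> sets T"
      by (intro sets.sets_Collect_countable_Ex sets.sets_Collect_countable_All drops) simp
    finally show ?thesis
      unfolding sets_T .
  qed
  then show ?thesis
    unfolding N.tail_events_def by blast
qed

lemma measure_noise_section_0_1: "measure noise (noise_section w) = 0 \<or> measure noise (noise_section w) = 1"
  by (rule prob_space.kolmogorov_0_1_law[OF prob_space_noise sigma_algebra_column_events
        indep_sets_column_events noise_section_tail_event])

section \<open>The ergodic argument\<close>

definition shift_pair :: "env \<times> env \<Rightarrow> env \<times> env" where
  "shift_pair p = (shift (fst p), shift (snd p))"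

context
  fixes \<mu> :: "env measure"
  assumes erg: "stationary_ergodic \<mu>"
begin

lemma prob_space_env: "prob_space \<mu>"
  using erg by (simp add: stationary_ergodic_def)

lemma sets_env: "sets \<mu> = sets OmegaM"
  using erg by (simp add: stationary_ergodic_def)

lemma measurable_shift_env: "shift \<in> measurable \<mu> \<mu>"
  using measurable_shift_PiM[of "restrict_space borel {0..1}"]
    measurable_cong_sets[OF sets_env sets_env] by (simp add: OmegaM_def)

lemma distr_shift_env: "distr \<mu> \<mu> shift = \<mu>"
proof -
  have "distr \<mu> \<mu> shift = distr \<mu> OmegaM shift"
    by (rule distr_cong) (simp_all add: sets_env)
  also have "\<dots> = \<mu>"
    using erg by (simp add: stationary_ergodic_def)
  finally show ?thesis .
qed

lemma pair_prob_space_env_noise: "pair_prob_space \<mu> noise"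
  unfolding pair_prob_space_def pair_sigma_finite_def
  using prob_space_env prob_space_noise prob_space_imp_sigma_finite by auto

lemma measurable_shift_pair: "shift_pair \<in> measurable (\<mu> \<Otimes>\<^sub>M noise) (\<mu> \<Otimes>\<^sub>M noise)"
  unfolding shift_pair_def
  by (intro measurable_Pair measurable_compose[OF measurable_fst measurable_shift_env]
        measurable_compose[OF measurable_snd measurable_shift_noise])

lemma distr_shift_pair: "distr (\<mu> \<Otimes>\<^sub>M noise) (\<mu> \<Otimes>\<^sub>M noise) shift_pair = \<mu> \<Otimes>\<^sub>M noise"
proof -
  have "sigma_finite_measure (distr noise noise shift)"
    by (simp add: distr_shift_noise prob_space_imp_sigma_finite prob_space_noise)
  then have "distr \<mu> \<mu> shift \<Otimes>\<^sub>M distr noise noise shift =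
               distr (\<mu> \<Otimes>\<^sub>M noise) (\<mu> \<Otimes>\<^sub>M noise) (\<lambda>(x, y). (shift x, shift y))"
    by (rule pair_measure_distr[OF measurable_shift_env measurable_shift_noise])
  moreover have "(\<lambda>(x, y). (shift x, shift y)) = shift_pair"
    by (simp add: shift_pair_def fun_eq_iff)
  ultimately show ?thesis
    by (simp add: distr_shift_env distr_shift_noise)
qed

lemma sets_Collect_arrow: "1 \<le> k \<Longrightarrow> {p \<in> space (\<mu> \<Otimes>\<^sub>M noise). arrow p y k} \<in> sets (\<mu> \<Otimes>\<^sub>M noise)"
proof -
  assume k: "1 \<le> k"
  have "(\<lambda>w. w (y, k)) \<in> measurable OmegaM (restrict_space borel {0..1})"
    unfolding OmegaM_def by (rule measurable_component_singleton) (use k in simp)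
  then have "(\<lambda>w. w (y, k)) \<in> borel_measurable OmegaM"
    by (simp add: measurable_restrict_space2_iff)
  then have "(\<lambda>w. w (y, k)) \<in> borel_measurable \<mu>"
    using measurable_cong_sets[OF sets_env refl] by blast
  then have env: "(\<lambda>p. fst p (y, k)) \<in> borel_measurable (\<mu> \<Otimes>\<^sub>M noise)"
    by (rule measurable_compose[OF measurable_fst])
  have "(\<lambda>p. snd p (y, k)) \<in> borel_measurable (\<mu> \<Otimes>\<^sub>M noise)"
    by (rule measurable_compose[OF measurable_snd measurable_noise_coordinate[OF k]])
  then show ?thesis
    unfolding arrow_def by (rule borel_measurable_less[OF _ env])
qed

lemma sets_Collect_arrow_drops_below:
  "{p \<in> space (\<mu> \<Otimes>\<^sub>M noise). drops_below x (arrow p)} \<in> sets (\<mu> \<Otimes>\<^sub>M noise)"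
  by (rule sets_Collect_drops_below) (simp add: sets_Collect_arrow)

lemma sets_Collect_arrow_drops_below_ultimately:
  "{p \<in> space (\<mu> \<Otimes>\<^sub>M noise). drops_below_ultimately (arrow p)} \<in> sets (\<mu> \<Otimes>\<^sub>M noise)"
  unfolding drops_below_ultimately_def
  by (intro sets.sets_Collect_countable_Ex sets.sets_Collect_countable_All sets_Collect_arrow_drops_below)

lemma measure_drops_below_stationary:
  "measure (\<mu> \<Otimes>\<^sub>M noise) {p \<in> space (\<mu> \<Otimes>\<^sub>M noise). drops_below (int m) (arrow p)}
     = measure (\<mu> \<Otimes>\<^sub>M noise) {p \<in> space (\<mu> \<Otimes>\<^sub>M noise). drops_below 0 (arrow p)}"
proof (induction m)
  case (Suc m)
  let ?P = "\<mu> \<Otimes>\<^sub>M noise"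
  have "shift_pair -` {p \<in> space ?P. drops_below (int m) (arrow p)} \<inter> space ?P =
          {p \<in> space ?P. drops_below (int (Suc m)) (arrow p)}"
    using measurable_space[OF measurable_shift_pair]
    by (auto simp: shift_pair_def drops_below_arrow_shift add.commute)
  then have "measure ?P {p \<in> space ?P. drops_below (int (Suc m)) (arrow p)} =
               measure (distr ?P ?P shift_pair) {p \<in> space ?P. drops_below (int m) (arrow p)}"
    by (simp add: measure_distr[OF measurable_shift_pair sets_Collect_arrow_drops_below])
  then show ?case
    using Suc by (simp add: distr_shift_pair)
qed simp

lemma Pair_vimage_drops_below_ultimately:
  "w \<in> space \<mu> \<Longrightarrow>
     Pair w -` {p \<in> space (\<mu> \<Otimes>\<^sub>M noise). drops_below_ultimately (arrow p)} = noise_section w"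
  by (auto simp: noise_section_def space_pair_measure)

lemma emeasure_noise_section_shift:
  assumes w: "w \<in> space \<mu>"
  shows "emeasure noise (noise_section (shift w)) = emeasure noise (noise_section w)"
proof -
  have sets_section: "noise_section (shift w) \<in> sets noise"
    using measurable_sets[OF measurable_Pair1'[OF measurable_space[OF measurable_shift_env w]]
        sets_Collect_arrow_drops_below_ultimately]
      Pair_vimage_drops_below_ultimately[OF measurable_space[OF measurable_shift_env w]]
    by (simp add: noise_section_def Int_absorb2)
  have "noise_section w = shift -` noise_section (shift w) \<inter> space noise"
    using measurable_space[OF measurable_shift_noise]
    by (auto simp: noise_section_def drops_below_ultimately_arrow_shift)
  then have "emeasure noise (noise_section w) = emeasure (distr noise noise shift) (noise_section (shift w))"
    by (simp add: emeasure_distr[OF measurable_shift_noise sets_section])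
  then show ?thesis
    by (simp add: distr_shift_noise)
qed

text \<open>The joint shift need not be ergodic; ergodicity of \<open>\<mu>\<close> is applied instead to the
  conditional probability given the environment, which is \<open>0\<close> or \<open>1\<close> by Kolmogorov's law and
  shift-invariant.\<close>

lemma measure_drops_below_ultimately_0_1:
  defines "B \<equiv> {p \<in> space (\<mu> \<Otimes>\<^sub>M noise). drops_below_ultimately (arrow p)}"
  shows "measure (\<mu> \<Otimes>\<^sub>M noise) B = 0 \<or> measure (\<mu> \<Otimes>\<^sub>M noise) B = 1"
proof -
  interpret E: prob_space \<mu> by (rule prob_space_env)
  interpret N: prob_space noise by (rule prob_space_noise)
  interpret P: pair_prob_space \<mu> noise by (rule pair_prob_space_env_noise)
  have B: "B \<in> sets (\<mu> \<Otimes>\<^sub>M noise)"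
    unfolding B_def by (rule sets_Collect_arrow_drops_below_ultimately)
  define H where "H = {w \<in> space \<mu>. emeasure noise (noise_section w) = 1}"
  have "(\<lambda>w. emeasure noise (Pair w -` B)) \<in> borel_measurable \<mu>"
    by (rule N.measurable_emeasure_Pair[OF B])
  then have "(\<lambda>w. emeasure noise (noise_section w)) \<in> borel_measurable \<mu>"
    by (rule measurable_cong[THEN iffD1, rotated]) (simp only: B_def Pair_vimage_drops_below_ultimately)
  then have H: "H \<in> sets \<mu>"
    unfolding H_def by measurable
  have "shift -` H \<inter> space \<mu> = H"
    using measurable_space[OF measurable_shift_env] emeasure_noise_section_shift
    by (auto simp: H_def)
  then have "measure \<mu> H = 0 \<or> measure \<mu> H = 1"
    using erg H unfolding stationary_ergodic_def by blast
  moreover have "emeasure (\<mu> \<Otimes>\<^sub>M noise) B = emeasure \<mu> H"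
  proof -
    have "emeasure (\<mu> \<Otimes>\<^sub>M noise) B = (\<integral>\<^sup>+ w. emeasure noise (Pair w -` B) \<partial>\<mu>)"
      by (rule N.emeasure_pair_measure_alt[OF B])
    also have "\<dots> = (\<integral>\<^sup>+ w. indicator H w \<partial>\<mu>)"
    proof (rule nn_integral_cong)
      fix w assume w: "w \<in> space \<mu>"
      have "Pair w -` B = noise_section w"
        unfolding B_def by (rule Pair_vimage_drops_below_ultimately[OF w])
      then show "emeasure noise (Pair w -` B) = indicator H w"
        using measure_noise_section_0_1[of w] w by (auto simp: H_def indicator_def N.emeasure_eq_measure)
    qed
    also have "\<dots> = emeasure \<mu> H"
      using H by simp
    finally show ?thesis .
  qed
  ultimately show ?thesis
    using E.emeasure_eq_measure P.emeasure_eq_measure by auto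
qed

lemma measure_drops_below_ultimately_le:
  "measure (\<mu> \<Otimes>\<^sub>M noise) {p \<in> space (\<mu> \<Otimes>\<^sub>M noise). drops_below_ultimately (arrow p)}
     \<le> measure (\<mu> \<Otimes>\<^sub>M noise) {p \<in> space (\<mu> \<Otimes>\<^sub>M noise). drops_below 0 (arrow p)}"
proof -
  interpret P: pair_prob_space \<mu> noise by (rule pair_prob_space_env_noise)
  let ?P = "\<mu> \<Otimes>\<^sub>M noise"
  define D where "D m = {p \<in> space ?P. \<forall>j::nat. drops_below (int m + int j) (arrow p)}" for m
  have "range D \<subseteq> sets ?P"
    unfolding D_def by (auto intro!: sets.sets_Collect_countable_All sets_Collect_arrow_drops_below)
  moreover have "incseq D"
  proof (rule incseq_SucI)
    fix m
    have "drops_below (int (Suc m) + int j) a" if "\<forall>j::nat. drops_below (int m + int j) a" for a j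
      using that[rule_format, of "Suc j"] by (simp add: ac_simps)
    then show "D m \<subseteq> D (Suc m)"
      unfolding D_def by blast
  qed
  ultimately have "(\<lambda>m. measure ?P (D m)) \<longlonglongrightarrow> measure ?P (\<Union>m. D m)"
    by (rule P.finite_Lim_measure_incseq)
  moreover have "measure ?P (D m) \<le> measure ?P {p \<in> space ?P. drops_below 0 (arrow p)}" for m
  proof -
    have "measure ?P (D m) \<le> measure ?P {p \<in> space ?P. drops_below (int m) (arrow p)}"
      by (rule P.finite_measure_mono) (auto simp: D_def sets_Collect_arrow_drops_below dest: spec[of _ 0])
    then show ?thesis
      by (simp only: measure_drops_below_stationary)
  qed
  ultimately have "measure ?P (\<Union>m. D m) \<le> measure ?P {p \<in> space ?P. drops_below 0 (arrow p)}"
    by (intro LIMSEQ_le_const2) auto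
  moreover have "(\<Union>m. D m) = {p \<in> space ?P. drops_below_ultimately (arrow p)}"
    by (auto simp: drops_below_ultimately_def D_def)
  ultimately show ?thesis
    by simp
qed

lemma AE_not_drops_below_ultimately:
  assumes "measure (\<mu> \<Otimes>\<^sub>M noise) {p \<in> space (\<mu> \<Otimes>\<^sub>M noise). \<forall>t. walk (arrow p) 0 t \<noteq> -1} > 0"
  shows "AE p in \<mu> \<Otimes>\<^sub>M noise. \<not> drops_below_ultimately (arrow p)"
proof -
  interpret P: pair_prob_space \<mu> noise by (rule pair_prob_space_env_noise)
  let ?P = "\<mu> \<Otimes>\<^sub>M noise"
  let ?B = "{p \<in> space ?P. drops_below_ultimately (arrow p)}"
  have "{p \<in> space ?P. \<forall>t. walk (arrow p) 0 t \<noteq> -1} = space ?P - {p \<in> space ?P. drops_below 0 (arrow p)}"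
    by (auto simp: drops_below_iff_hits_pred)
  then have "measure ?P {p \<in> space ?P. drops_below 0 (arrow p)} < 1"
    using assms P.prob_compl[OF sets_Collect_arrow_drops_below[of 0]] by simp
  then have "measure ?P ?B = 0"
    using measure_drops_below_ultimately_0_1 measure_drops_below_ultimately_le by fastforce
  then show ?thesis
    using sets_Collect_arrow_drops_below_ultimately
    by (intro AE_I[where N = ?B]) (auto simp: P.emeasure_eq_measure)
qed

end

theorem lemma3p7:
  fixes \<mu> :: "env measure"
  assumes "stationary_ergodic \<mu>"
    and "nondegenerate \<mu>"
    and "measure (jointM \<mu>) {p \<in> space (jointM \<mu>). \<forall>t. walk (arrow p) 0 t \<noteq> -1} > 0"
  shows "AE p in jointM \<mu>.
           finite {(\<tau>0, \<tau>1). right_excursion (walk (arrow p) 0) \<tau>0 \<tau>1}"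
proof -
  have "AE p in \<mu> \<Otimes>\<^sub>M noise. \<not> drops_below_ultimately (arrow p)"
    using AE_not_drops_below_ultimately[OF assms(1)] assms(3) by (simp add: jointM_eq_noise)
  moreover have "AE p in \<mu> \<Otimes>\<^sub>M noise. \<forall>x. nondegenerate_seq (arrow p x)"
    using assms(2) unfolding nondegenerate_def jointM_eq_noise .
  ultimately have "AE p in \<mu> \<Otimes>\<^sub>M noise. finite {t. walk (arrow p) 0 t = 0}"
  proof eventually_elim
    case (elim p)
    then show ?case
      using recurrent_imp_drops_below_ultimately[of "arrow p"] by blast
  qed
  then show ?thesis
    unfolding jointM_eq_noise by eventually_elim (rule finite_right_excursions_if_finite_zeros)
qed

end
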